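(* Let $P$ be a set of $n$ points in the plane and let $\mathcal{D}'$ be a set of closed disks with pairwise disjoint interiors such that the boundary circle of each disk in $\mathcal{D}'$ contains at least two points of $P$. Then $|\mathcal{D}'|\le n$. Moreover, this bound is tight: for every $n\ge 3$ there exist a set $P$ of $n$ points and such a family $\mathcal{D}'$ with $|\mathcal{D}'|=n$. *)

theory Defs
  imports "HOL-Analysis.Analysis"
begin

definition closed_disk :: "(real^2) set \<Rightarrow> bool" where
  "closed_disk D \<longleftrightarrow> (\<exists>c r. r > 0 \<and> D = cball c r)"

definition admissible_family :: "(real^2) set \<Rightarrow> (real^2) set set \<Rightarrow> bool" where
  "admissible_family P DD \<longleftrightarrow>
     (\<forall>D\<in>DD. closed_disk D \<and> (\<exists>p q. p \<in> P \<and> q \<in> P \<and> p \<noteq> q \<and> p \<in> frontier D \<and> q \<in> frontier D))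
     \<and> (\<forall>D1\<in>DD. \<forall>D2\<in>DD. D1 \<noteq> D2 \<longrightarrow> interior D1 \<inter> interior D2 = {})"

end

theory Submission
  imports Defs
begin

text \<open>
  If two closed disks with disjoint interiors both have the point p on
  their boundary circle, then they are tangent at p: their inward unit normals at p are
  opposite, since otherwise a short step from p along the sum of the two normals enters
  both open disks.  Three such disks would need three pairwise opposite unit vectors,
  which is impossible, so every point lies on at most two of the boundary circles.
  Counting incidences between P and the disks, each disk contributes at least two and
  each point at most two, hence the number of disks is at most the number of points.

  Any closed chain of n \<ge> 3 unit disks whose centres are pairwise at
  distance at least 2 and consecutive ones at distance exactly 2 has disjoint interiors,
  and the n tangency points of consecutive disks lie on two circles each; by the upper
  bound these n points are distinct.  Such a chain is obtained by placing the centres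
  as a closed zigzag on two rows of the triangular lattice.
\<close>

text \<open>Let the sphere of the ball with centre c = p + r u (u a unit vector) pass through p.
  The ball contains p + t w for 0 < t < r whenever w \<noteq> 0 satisfies 2 (u \<bullet> w) = w \<bullet> w;
  this identity holds for w = u + u' with u' any other unit vector.\<close>

lemma point_along_bisector_in_ball:
  fixes c p u w :: "'a::real_inner"
  assumes c: "c = p + r *\<^sub>R u" and u: "norm u = 1" and uw: "2 * (u \<bullet> w) = w \<bullet> w"
    and w: "w \<noteq> 0" and t: "0 < t" "t < r"
  shows "p + t *\<^sub>R w \<in> ball c r"
proof -
  have "(dist c (p + t *\<^sub>R w))\<^sup>2 = (r *\<^sub>R u - t *\<^sub>R w) \<bullet> (r *\<^sub>R u - t *\<^sub>R w)"
    using c by (simp add: dist_norm power2_norm_eq_inner algebra_simps)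
  also have "\<dots> = r\<^sup>2 * (u \<bullet> u) - 2 * r * t * (u \<bullet> w) + t\<^sup>2 * (w \<bullet> w)"
    by (simp add: inner_diff_left inner_diff_right inner_commute[of w u] power2_eq_square algebra_simps)
  also have "\<dots> = r\<^sup>2 - t * (r - t) * (w \<bullet> w)"
    using u uw by (simp add: power2_norm_eq_inner[symmetric] power2_eq_square algebra_simps)
  also have "\<dots> < r\<^sup>2"
    using w t by simp
  finally have "(dist c (p + t *\<^sub>R w))\<^sup>2 < r\<^sup>2" .
  thus ?thesis
    using t by (simp add: power2_less_imp_less)
qed

lemma disjoint_balls_opposite_normals:
  fixes c1 c2 p :: "'a::real_inner"
  assumes r: "r1 > 0" "r2 > 0" and on_sphere: "dist c1 p = r1" "dist c2 p = r2"
    and disj: "ball c1 r1 \<inter> ball c2 r2 = {}"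
  shows "(1/r1) *\<^sub>R (c1 - p) = - ((1/r2) *\<^sub>R (c2 - p))"
proof (rule ccontr)
  define u1 where "u1 = (1/r1) *\<^sub>R (c1 - p)"
  define u2 where "u2 = (1/r2) *\<^sub>R (c2 - p)"
  define w where "w = u1 + u2"
  define t where "t = min r1 r2 / 2"
  assume "\<not> ?thesis"
  hence "w \<noteq> 0"
    unfolding w_def u1_def u2_def by (simp add: add_eq_0_iff2)
  have unit: "norm u1 = 1" "norm u2 = 1"
    using r on_sphere by (simp_all add: u1_def u2_def dist_norm norm_minus_commute)
  hence "u1 \<bullet> u1 = 1" "u2 \<bullet> u2 = 1"
    by (simp_all add: norm_eq_1)
  hence "2 * (u1 \<bullet> w) = w \<bullet> w" "2 * (u2 \<bullet> w) = w \<bullet> w"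
    by (simp_all add: w_def inner_add_left inner_add_right inner_commute)
  moreover have "c1 = p + r1 *\<^sub>R u1" "c2 = p + r2 *\<^sub>R u2"
    using r by (simp_all add: u1_def u2_def)
  moreover have "0 < t" "t < r1" "t < r2"
    using r by (auto simp: t_def)
  ultimately have "p + t *\<^sub>R w \<in> ball c1 r1 \<inter> ball c2 r2"
    using point_along_bisector_in_ball unit \<open>w \<noteq> 0\<close> by blast
  with disj show False by blast
qed

text \<open>Hence no three pairwise disjoint open balls have a common boundary point: their
  normals at that point would be pairwise opposite.\<close>

lemma no_three_disjoint_balls_share_boundary_point:
  fixes c1 c2 c3 p :: "'a::real_inner"
  assumes r: "r1 > 0" "r2 > 0" "r3 > 0"
    and on_sphere: "dist c1 p = r1" "dist c2 p = r2" "dist c3 p = r3"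
    and disj: "ball c1 r1 \<inter> ball c2 r2 = {}" "ball c1 r1 \<inter> ball c3 r3 = {}"
      "ball c2 r2 \<inter> ball c3 r3 = {}"
  shows False
proof -
  define u where "u c r = (1/r) *\<^sub>R (c - p)" for c r
  have "u c1 r1 = - u c2 r2" "u c1 r1 = - u c3 r3" "u c2 r2 = - u c3 r3"
    using disjoint_balls_opposite_normals r on_sphere disj unfolding u_def by blast+
  hence "u c2 r2 = - u c2 r2"
    by metis
  hence "u c2 r2 = 0"
    by (simp add: eq_neg_iff_add_eq_0 flip: scaleR_2)
  hence "c2 = p"
    using r by (simp add: u_def)
  with on_sphere r show False by simp
qed

lemma card_le_2_if_no_three_distinct:
  assumes "\<And>a b c. a \<in> S \<Longrightarrow> b \<in> S \<Longrightarrow> c \<in> S \<Longrightarrow> a \<noteq> b \<Longrightarrow> a \<noteq> c \<Longrightarrow> b \<noteq> c \<Longrightarrow> False"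
  shows "finite S \<and> card S \<le> 2"
proof (rule ccontr)
  assume "\<not> ?thesis"
  then consider "infinite S" | "3 \<le> card S"
    by linarith
  then obtain T where "T \<subseteq> S" "card T = 3"
    by cases (metis infinite_arbitrarily_large, metis obtain_subset_with_card_n)
  then obtain a b c where "{a, b, c} \<subseteq> S" "a \<noteq> b" "a \<noteq> c" "b \<noteq> c"
    by (auto simp: card_3_iff)
  with assms show False by blast
qed

lemma disks_through_point_le_2:
  assumes disks: "\<forall>D\<in>DD. closed_disk D"
    and disj: "\<forall>D1\<in>DD. \<forall>D2\<in>DD. D1 \<noteq> D2 \<longrightarrow> interior D1 \<inter> interior D2 = {}"
  shows "finite {D \<in> DD. p \<in> frontier D} \<and> card {D \<in> DD. p \<in> frontier D} \<le> 2"
proof (rule card_le_2_if_no_three_distinct)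
  fix D1 D2 D3
  assume D: "D1 \<in> {D \<in> DD. p \<in> frontier D}" "D2 \<in> {D \<in> DD. p \<in> frontier D}"
    "D3 \<in> {D \<in> DD. p \<in> frontier D}" and ne: "D1 \<noteq> D2" "D1 \<noteq> D3" "D2 \<noteq> D3"
  obtain c1 r1 c2 r2 c3 r3 where D_eq: "D1 = cball c1 r1" "D2 = cball c2 r2" "D3 = cball c3 r3"
    and r: "r1 > 0" "r2 > 0" "r3 > 0"
    using D disks unfolding closed_disk_def by (metis (no_types, lifting) mem_Collect_eq)
  have "interior D1 \<inter> interior D2 = {}" "interior D1 \<inter> interior D3 = {}"
    "interior D2 \<inter> interior D3 = {}"
    using D disj ne by auto
  hence "ball c1 r1 \<inter> ball c2 r2 = {}" "ball c1 r1 \<inter> ball c3 r3 = {}"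
    "ball c2 r2 \<inter> ball c3 r3 = {}"
    unfolding D_eq interior_cball .
  moreover have "dist c1 p = r1" "dist c2 p = r2" "dist c3 p = r3"
    using D r unfolding D_eq by (auto simp: frontier_cball)
  ultimately show False
    using no_three_disjoint_balls_share_boundary_point r by blast
qed

lemma card_le_by_double_counting:
  fixes R :: "'a \<Rightarrow> 'b \<Rightarrow> bool"
  assumes fin: "finite A" "finite B" and k: "k > 0"
    and many: "\<And>b. b \<in> B \<Longrightarrow> k \<le> card {a \<in> A. R a b}"
    and few: "\<And>a. a \<in> A \<Longrightarrow> card {b \<in> B. R a b} \<le> k"
  shows "card B \<le> card A"
proof -
  have "k * card B \<le> (\<Sum>b\<in>B. card {a \<in> A. R a b})"
    using many sum_mono[of B "\<lambda>_. k"] by (simp add: mult.commute)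
  also have "\<dots> = (\<Sum>b\<in>B. \<Sum>a\<in>A. if R a b then 1 else 0)"
    using fin by (simp add: sum.inter_filter [symmetric])
  also have "\<dots> = (\<Sum>a\<in>A. \<Sum>b\<in>B. if R a b then 1 else 0)"
    by (rule sum.swap)
  also have "\<dots> = (\<Sum>a\<in>A. card {b \<in> B. R a b})"
    using fin by (simp add: sum.inter_filter [symmetric])
  also have "\<dots> \<le> k * card A"
    using few sum_mono[of A _ "\<lambda>_. k"] by (simp add: mult.commute)
  finally show ?thesis
    using k by simp
qed

theorem admissible_family_card_le:
  assumes fin: "finite P" and adm: "admissible_family P DD"
  shows "finite DD \<and> card DD \<le> card P"
proof -
  have two_points: "\<exists>p q. p \<in> P \<and> q \<in> P \<and> p \<noteq> q \<and> p \<in> frontier D \<and> q \<in> frontier D"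
    if "D \<in> DD" for D
    using adm that unfolding admissible_family_def by blast
  have through: "finite {D \<in> DD. p \<in> frontier D} \<and> card {D \<in> DD. p \<in> frontier D} \<le> 2" for p
    using adm unfolding admissible_family_def by (simp add: disks_through_point_le_2)
  have "DD \<subseteq> (\<Union>p\<in>P. {D \<in> DD. p \<in> frontier D})"
    using two_points by blast
  moreover have "finite (\<Union>p\<in>P. {D \<in> DD. p \<in> frontier D})"
    using fin through by (intro finite_UN_I) auto
  ultimately have finDD: "finite DD"
    by (rule finite_subset)
  have "2 \<le> card {p \<in> P. p \<in> frontier D}" if D: "D \<in> DD" for D
  proof -
    obtain p q where "p \<in> P" "q \<in> P" "p \<noteq> q" "p \<in> frontier D" "q \<in> frontier D"
      using two_points[OF D] by blast
    hence "{p, q} \<subseteq> {p \<in> P. p \<in> frontier D}" "card {p, q} = 2"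
      by auto
    moreover have "finite {p \<in> P. p \<in> frontier D}"
      using fin by simp
    ultimately show ?thesis
      by (metis card_mono)
  qed
  hence "card DD \<le> card P"
    using fin finDD through by (intro card_le_by_double_counting[where k = 2]) auto
  with finDD show ?thesis ..
qed

lemma dist_vector_2:
  "dist (vector [a, b] :: real^2) (vector [c, d]) = sqrt ((a - c)\<^sup>2 + (b - d)\<^sup>2)"
  by (simp add: dist_norm norm_vec_def L2_set_def sum_2)

lemma dist_same_row: "dist (vector [a, y] :: real^2) (vector [b, y]) = \<bar>a - b\<bar>"
  by (simp add: dist_vector_2)

lemma dist_across_rows:
  "dist (vector [a, 0] :: real^2) (vector [b, sqrt 3]) = sqrt ((a - b)\<^sup>2 + 3)"
  by (simp add: dist_vector_2)

text \<open>Two points on different rows are at distance at least 2 when their abscissae differ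
  by at least 1, and at distance exactly 2 when they differ by exactly 1.\<close>

lemma sqrt_sq_plus_3_ge_2:
  fixes x :: real assumes "1 \<le> \<bar>x\<bar>" shows "2 \<le> sqrt (x\<^sup>2 + 3)"
proof -
  have "1 \<le> x\<^sup>2"
    using assms abs_le_square_iff[of 1 x] by simp
  hence "sqrt 4 \<le> sqrt (x\<^sup>2 + 3)"
    by (intro real_sqrt_le_mono) simp
  thus ?thesis
    by simp
qed

lemma sqrt_sq_plus_3_eq_2:
  fixes x :: real assumes "\<bar>x\<bar> = 1" shows "sqrt (x\<^sup>2 + 3) = 2"
proof -
  have "x\<^sup>2 = 1"
    using assms power2_abs[of x] by simp
  thus ?thesis
    by simp
qed

text \<open>The centres of the closed chain of n disks: the first \<lceil>n/2\<rceil> centres run to the right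
  along the lower row at abscissae 0, 2, 4, ..., the remaining ones run back along the
  upper row at odd abscissae, ending at abscissa 1 next to the first centre.\<close>

definition zigzag :: "nat \<Rightarrow> nat \<Rightarrow> real^2" where
  "zigzag n i = (if i < (n + 1) div 2 then vector [2 * real i, 0]
                 else vector [2 * (real n - real i) - 1, sqrt 3])"

text \<open>Distinct centres are at distance at least 2: on a common row the abscissae are
  distinct and of equal parity, on different rows they have different parity.\<close>

lemma zigzag_separated:
  assumes "i < n" "j < n" "i \<noteq> j"
  shows "2 \<le> dist (zigzag n i) (zigzag n j)"
proof -
  have apart: "1 \<le> \<bar>real i - real j\<bar>"
    using assms(3) by (cases "i < j") auto
  have odd_gap: "1 \<le> \<bar>2 * real a - (2 * (real n - real b) - 1)\<bar>" for a b
  proof (cases "a + b < n")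
    case True
    hence "real a + real b + 1 \<le> real n"
      by linarith
    thus ?thesis by (simp add: abs_if)
  next
    case False
    hence "real n \<le> real a + real b"
      by linarith
    thus ?thesis by (simp add: abs_if)
  qed
  consider "i < (n + 1) div 2" "j < (n + 1) div 2" | "\<not> i < (n + 1) div 2" "\<not> j < (n + 1) div 2"
    | "i < (n + 1) div 2" "\<not> j < (n + 1) div 2" | "\<not> i < (n + 1) div 2" "j < (n + 1) div 2"
    by blast
  thus ?thesis
  proof cases
    case 1
    thus ?thesis using apart by (simp add: zigzag_def dist_same_row)
  next
    case 2
    thus ?thesis using apart by (simp add: zigzag_def dist_same_row)
  next
    case 3
    thus ?thesis
      using sqrt_sq_plus_3_ge_2[OF odd_gap[of i j]] by (simp add: zigzag_def dist_across_rows)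
  next
    case 4
    thus ?thesis
      using sqrt_sq_plus_3_ge_2[OF odd_gap[of j i]]
      by (simp add: zigzag_def dist_across_rows dist_commute)
  qed
qed

lemma zigzag_consecutive:
  assumes n: "3 \<le> n" and i: "i < n"
  shows "dist (zigzag n i) (zigzag n (Suc i mod n)) = 2"
proof -
  define m where "m = (n + 1) div 2"
  have m: "0 < m" "m < n"
    using n unfolding m_def by auto
  have low: "zigzag n k = vector [2 * real k, 0]" if "k < m" for k
    using that by (simp add: zigzag_def m_def)
  have high: "zigzag n k = vector [2 * (real n - real k) - 1, sqrt 3]" if "m \<le> k" for k
    using that by (simp add: zigzag_def m_def)
  consider "Suc i < m" | "Suc i = m" | "m \<le> i" "Suc i < n" | "Suc i = n"
    using i by linarith
  thus ?thesis
  proof cases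
    case 1
    thus ?thesis using m by (simp add: low dist_same_row)
  next
    case 2
    hence "n = 2 * i + 1 \<or> n = 2 * i + 2"
      unfolding m_def by presburger
    hence "\<bar>2 * real i - (2 * (real n - real (Suc i)) - 1)\<bar> = 1"
      by auto
    thus ?thesis
      using 2 m sqrt_sq_plus_3_eq_2 by (simp add: low high dist_across_rows)
  next
    case 3
    thus ?thesis by (simp add: high dist_same_row)
  next
    case 4
    have "real n - real i = 1"
      by (simp flip: 4)
    moreover have "m \<le> i"
      using 4 m by linarith
    ultimately have "zigzag n i = vector [1, sqrt 3]"
      by (simp add: high)
    moreover have "zigzag n (Suc i mod n) = vector [0, 0]"
      using 4 m by (simp add: low)
    ultimately show ?thesis
      using sqrt_sq_plus_3_eq_2[of "-1"] by (simp add: dist_across_rows dist_commute)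
  qed
qed

text \<open>The
  two points on disk i are its tangency points with disks i + 1 and i - 1 (mod n);
  that all n tangency points are distinct follows from the upper bound itself.\<close>

lemma tangent_unit_disk_cycle:
  fixes c :: "nat \<Rightarrow> real^2"
  assumes n: "3 \<le> n"
    and separated: "\<And>i j. i < n \<Longrightarrow> j < n \<Longrightarrow> i \<noteq> j \<Longrightarrow> 2 \<le> dist (c i) (c j)"
    and consecutive: "\<And>i. i < n \<Longrightarrow> dist (c i) (c (Suc i mod n)) = 2"
  shows "\<exists>P DD. finite P \<and> card P = n \<and> admissible_family P DD \<and> finite DD \<and> card DD = n"
proof -
  define succ where "succ i = Suc i mod n" for i
  define pred where "pred i = (i + n - 1) mod n" for i
  define disk where "disk i = cball (c i) 1" for i
  define touch where "touch i = midpoint (c i) (c (succ i))" for i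
  define DD where "DD = disk ` {..<n}"
  define P where "P = touch ` {..<n}"
  have succ_lt: "succ i < n" and pred_lt: "pred i < n" for i
    using n by (simp_all add: succ_def pred_def)
  have succ_pred: "succ (pred i) = i" if "i < n" for i
    using that by (simp add: succ_def pred_def mod_Suc_eq)
  have succ_ne_pred: "succ i \<noteq> pred i" if "i < n" for i
  proof -
    have "succ i = (if Suc i = n then 0 else Suc i)"
      using that by (auto simp: succ_def)
    moreover have "pred i = (if i = 0 then n - 1 else i - 1)"
      using that n by (auto simp: pred_def mod_if)
    ultimately show ?thesis
      using that n by auto
  qed
  have c_inj: "c i = c j \<Longrightarrow> i = j" if "i < n" "j < n" for i j
    using separated[OF that] by fastforce
  have touch_on_circles: "touch i \<in> frontier (disk i)" "touch i \<in> frontier (disk (succ i))"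
    if "i < n" for i
    using consecutive[OF that]
    by (simp_all add: touch_def disk_def succ_def frontier_cball dist_midpoint)
  have disk_inj: "inj_on disk {..<n}"
    by (rule inj_onI) (auto simp: disk_def cball_eq_cball_iff c_inj)
  have disjoint: "interior (disk i) \<inter> interior (disk j) = {}" if "i < n" "j < n" "i \<noteq> j" for i j
    using separated[OF that] by (simp add: disk_def interior_cball disjoint_ballI)
  have two_touching_points: "touch i \<noteq> touch (pred i)" if "i < n" for i
  proof
    assume "touch i = touch (pred i)"
    hence "c (succ i) = c (pred i)"
      using succ_pred[OF that] by (simp add: touch_def midpoint_eq_iff midpoint_def algebra_simps)
    thus False
      using c_inj succ_lt pred_lt succ_ne_pred[OF that] by blast
  qed
  have adm: "admissible_family P DD"
    unfolding admissible_family_def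
  proof (intro conjI ballI impI)
    fix D assume "D \<in> DD"
    then obtain i where i: "i < n" "D = disk i"
      by (auto simp: DD_def)
    show "closed_disk D"
      unfolding i closed_disk_def disk_def by (intro exI[of _ "c i"] exI[of _ 1]) simp
    have "touch i \<in> frontier D" "touch (pred i) \<in> frontier D"
      using touch_on_circles(1)[OF i(1)] touch_on_circles(2)[OF pred_lt[of i]] succ_pred[OF i(1)] i(2)
      by simp_all
    moreover have "touch i \<in> P" "touch (pred i) \<in> P"
      using i(1) pred_lt by (simp_all add: P_def)
    ultimately show "\<exists>p q. p \<in> P \<and> q \<in> P \<and> p \<noteq> q \<and> p \<in> frontier D \<and> q \<in> frontier D"
      using two_touching_points[OF i(1)] by blast
  next
    fix D1 D2 assume "D1 \<in> DD" "D2 \<in> DD" "D1 \<noteq> D2"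
    thus "interior D1 \<inter> interior D2 = {}"
      using disjoint by (auto simp: DD_def)
  qed
  have card_DD: "card DD = n"
    using card_image[OF disk_inj] by (simp add: DD_def)
  have "card P \<le> n"
    using card_image_le[of "{..<n}" touch] by (simp add: P_def)
  moreover have "card DD \<le> card P"
    using admissible_family_card_le[OF _ adm] by (simp add: P_def)
  ultimately show ?thesis
    using adm card_DD by (intro exI[of _ P] exI[of _ DD]) (auto simp: P_def DD_def)
qed

lemma zigzag_tangent_family:
  assumes "3 \<le> n"
  shows "\<exists>(P :: (real^2) set) DD. finite P \<and> card P = n \<and>
           admissible_family P DD \<and> finite DD \<and> card DD = n"
  by (rule tangent_unit_disk_cycle[OF assms, where c = "zigzag n"])
    (simp_all add: zigzag_separated zigzag_consecutive[OF assms])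

theorem mainTheorem12:
  shows "(\<forall>(P :: (real^2) set) DD. finite P \<longrightarrow> admissible_family P DD \<longrightarrow>
            finite DD \<and> card DD \<le> card P)
       \<and> (\<forall>n::nat. n \<ge> 3 \<longrightarrow> (\<exists>(P :: (real^2) set) DD. finite P \<and> card P = n \<and>
            admissible_family P DD \<and> finite DD \<and> card DD = n))"
  using admissible_family_card_le zigzag_tangent_family by blast

end
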